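(* Let $q=p^m$ with $p$ prime, let $3\le k\le n\le q$, let $\alpha=(\alpha_1,\dots,\alpha_n)\in\mathbb{F}_q^n$ have pairwise distinct entries, let $v=(v_1,\dots,v_n)\in(\mathbb{F}_q^* )^n$, $\eta\in\mathbb{F}_q^*$ and $\delta\in\mathbb{F}_q$. Let $\mathcal{C}$ and $\mathcal{C}_1$ be the codes defined in the context. Define $\mathbf{t}=(t_1,\dots,t_{n+2})\in\mathbb{F}_q^{n+2}$ by $t_i=v_i^{-1}u_i\alpha_i^{\,n+2-k}$ for $1\le i\le n$, where $u_i=\prod_{j\ne i}(\alpha_i-\alpha_j)^{-1}$; $t_{n+1}=\delta-S_2-\eta S_5$; and $t_{n+2}=S_1$, where, with all $\sigma_r=\sigma_r([n])$, $S_1=\sigma_1$, $S_2=\sigma_1^2-\sigma_2$, and $S_5=-(\sigma_3\sigma_1^2+\sigma_5-\sigma_3\sigma_2-\sigma_4\sigma_1)+\sigma_2(\sigma_1^3+\sigma_3-2\sigma_2\sigma_1)+\sigma_1(\sigma_2\sigma_1^2+\sigma_4-\sigma_2^2-\sigma_3\sigma_1)-\sigma_1^2(\sigma_1^3+\sigma_3-2\sigma_2\sigma_1)$. Then $\mathcal{C}=\overline{\mathcal{C}_1}(\mathbf{t})$, i.e. $\mathcal{C}=\{(c_1,\dots,c_{n+2},\sum_{i=1}^{n+2}t_ic_i):(c_1,\dots,c_{n+2})\in\mathcal{C}_1\}$.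
   Context: For a finite set $I\subseteq[n]=\{1,\dots,n\}$ and $r\ge1$, $\sigma_r(I)=(-1)^r\sum_{i_1<\dots<i_r\in I}\alpha_{i_1}\cdots\alpha_{i_r}$ (with $\sigma_r(I)=0$ if $r>|I|$). Let $\mathcal{S}=\{f(x)=\sum_{i=0}^{k-1}f_ix^i+\eta f_{k-1}x^{k+2}: f_i\in\mathbb{F}_q\}$. The code $\mathcal{C}\subseteq\mathbb{F}_q^{n+3}$ is $\mathcal{C}=\{(v_1f(\alpha_1),\dots,v_nf(\alpha_n),f_{k-1},f_{k-2},f_{k-3}+\delta f_{k-1}): f\in\mathcal{S}\}$, where $f_j$ is the coefficient of $x^j$ in $f$ for $j\le k-1$. The code $\mathcal{C}_1\subseteq\mathbb{F}_q^{n+2}$ is obtained from $\mathcal{C}$ by deleting the last coordinate, i.e. $\mathcal{C}_1=\{(v_1f(\alpha_1),\dots,v_nf(\alpha_n),f_{k-1},f_{k-2}):f\in\mathcal{S}\}$. *)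

theory Defs
  imports "HOL-Computational_Algebra.Polynomial" "HOL-Computational_Algebra.Primes"
begin

definition sigma :: "(nat \<Rightarrow> 'a::comm_ring_1) \<Rightarrow> nat \<Rightarrow> nat set \<Rightarrow> 'a" where
  "sigma \<alpha> r I = (-1)^r * (\<Sum>J\<in>{J. J \<subseteq> I \<and> card J = r}. \<Prod>j\<in>J. \<alpha> j)"

definition polyS :: "nat \<Rightarrow> 'a::field \<Rightarrow> 'a poly set" where
  "polyS k \<eta> = {f. \<exists>c::nat \<Rightarrow> 'a.
      f = (\<Sum>i<k. monom (c i) i) + monom (\<eta> * c (k - 1)) (k + 2)}"

text \<open>The code C (length n+3), coordinates as lists; alpha, v indexed from 1.\<close>
definition codeC :: "nat \<Rightarrow> nat \<Rightarrow> (nat \<Rightarrow> 'a::field) \<Rightarrow> (nat \<Rightarrow> 'a) \<Rightarrow> 'a \<Rightarrow> 'a \<Rightarrow> 'a list set" where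
  "codeC n k \<alpha> v \<eta> \<delta> = (\<lambda>f. map (\<lambda>i. v i * poly f (\<alpha> i)) [1..<n+1]
        @ [coeff f (k - 1), coeff f (k - 2), coeff f (k - 3) + \<delta> * coeff f (k - 1)]) ` polyS k \<eta>"

definition codeC1 :: "nat \<Rightarrow> nat \<Rightarrow> (nat \<Rightarrow> 'a::field) \<Rightarrow> (nat \<Rightarrow> 'a) \<Rightarrow> 'a \<Rightarrow> 'a list set" where
  "codeC1 n k \<alpha> v \<eta> = (\<lambda>f. map (\<lambda>i. v i * poly f (\<alpha> i)) [1..<n+1]
        @ [coeff f (k - 1), coeff f (k - 2)]) ` polyS k \<eta>"

definition extend_code :: "'a::comm_ring_1 list set \<Rightarrow> (nat \<Rightarrow> 'a) \<Rightarrow> 'a list set" where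
  "extend_code D t = (\<lambda>c. c @ [\<Sum>i=1..length c. t i * c ! (i - 1)]) ` D"

end

(* With u_i the Lagrange weights of the distinct nodes alpha_i, the sums
   p_j = sum_i u_i alpha_i^j are the coefficients of x^(n-1) in the interpolants of x^j:
   they vanish for j < n - 1, and for j >= n - 1 they are the complete homogeneous symmetric
   polynomials h_(j-n+1), determined by the sigma_r through the power series identity
   (sum_r sigma_r x^r) (sum_m h_m x^m) = 1.  Hence the first n coordinates of a codeword,
   weighted by t, sum to f_(k-3) + h_1 f_(k-2) + (h_2 + eta h_5) f_(k-1), and S_1 = -h_1,
   S_2 = h_2, S_5 = h_5 make the two extra coordinates cancel all but f_(k-3) + delta f_(k-1). *)

theory Submission
  imports Defs
begin

lemma sigma_0: "finite A \<Longrightarrow> sigma \<alpha> 0 A = 1"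
proof -
  assume "finite A"
  then have "{J. J \<subseteq> A \<and> card J = 0} = {{}}"
    by (auto simp: card_eq_0_iff intro: finite_subset)
  then show ?thesis unfolding sigma_def by simp
qed

lemma sigma_eq_0_if_card_less: "finite A \<Longrightarrow> card A < r \<Longrightarrow> sigma \<alpha> r A = 0"
proof -
  assume "finite A" "card A < r"
  then have no_subsets: "{J. J \<subseteq> A \<and> card J = r} = {}"
    by (auto dest: card_mono)
  show ?thesis unfolding sigma_def no_subsets by simp
qed

lemma prod_diff_eq_sum_sigma:
  fixes \<alpha> :: "nat \<Rightarrow> 'a::comm_ring_1"
  assumes fin: "finite A"
  shows "(\<Prod>i\<in>A. x - \<alpha> i) = (\<Sum>r\<le>card A. sigma \<alpha> r A * x ^ (card A - r))"
proof -
  let ?term = "\<lambda>B. (-1) ^ card B * (\<Prod>i\<in>B. \<alpha> i) * x ^ (card A - card B)"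
  have "(\<Prod>i\<in>A. x - \<alpha> i) = (\<Sum>B\<in>Pow A. ?term B)"
    unfolding prod_diff_conv_sum[OF fin]
    by (rule sum.cong) (auto simp: card_Diff_subset fin finite_subset)
  also have "\<dots> = (\<Sum>r\<le>card A. \<Sum>B\<in>{B \<in> Pow A. card B = r}. ?term B)"
    by (rule sum.group[symmetric]) (use fin card_mono in auto)
  also have "\<dots> = (\<Sum>r\<le>card A. sigma \<alpha> r A * x ^ (card A - r))"
    unfolding sigma_def sum_distrib_right sum_distrib_left
    by (intro sum.cong refl) (auto simp: mult.assoc)
  finally show ?thesis .
qed

definition lagrange_weight :: "(nat \<Rightarrow> 'a::field) \<Rightarrow> nat set \<Rightarrow> nat \<Rightarrow> 'a" where
  "lagrange_weight \<alpha> A i = (\<Prod>l\<in>A - {i}. inverse (\<alpha> i - \<alpha> l))"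

lemma lagrange_weight_mult_prod_diff:
  assumes "finite A" "inj_on \<alpha> A" "i \<in> A" "l \<in> A"
  shows "lagrange_weight \<alpha> A i * (\<Prod>m\<in>A - {i}. \<alpha> l - \<alpha> m) = (if l = i then 1 else 0)"
proof (cases "l = i")
  case True
  have "\<alpha> i \<noteq> \<alpha> m" if "m \<in> A - {i}" for m
    using assms(2,3) that by (auto simp: inj_on_def)
  then show ?thesis
    using True unfolding lagrange_weight_def prod.distrib[symmetric] by (simp add: prod.neutral)
next
  case False
  then have "(\<Prod>m\<in>A - {i}. \<alpha> l - \<alpha> m) = 0"
    using assms by (intro prod_zero) auto
  then show ?thesis using False by simp
qed

lemma coeff_eq_sum_lagrange_weight:
  fixes \<alpha> :: "nat \<Rightarrow> 'a::field"
  assumes fin: "finite A" and inj: "inj_on \<alpha> A" and deg: "degree g < card A"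
  shows "coeff g (card A - 1) = (\<Sum>i\<in>A. lagrange_weight \<alpha> A i * poly g (\<alpha> i))"
proof -
  define L where "L i = (\<Prod>l\<in>A - {i}. [:- \<alpha> l, 1:])" for i
  define Q where "Q = (\<Sum>i\<in>A. smult (lagrange_weight \<alpha> A i * poly g (\<alpha> i)) (L i))"
  have degree_L: "degree (L i) = card A - 1" and lead_L: "coeff (L i) (card A - 1) = 1"
    if "i \<in> A" for i
  proof -
    show "degree (L i) = card A - 1"
      unfolding L_def using fin that by (subst degree_prod_eq_sum_degree) auto
    moreover have "lead_coeff (L i) = 1" unfolding L_def lead_coeff_prod by simp
    ultimately show "coeff (L i) (card A - 1) = 1" by simp
  qed
  have "g = Q"
  proof (rule poly_eqI_degree)
    fix x assume "x \<in> \<alpha> ` A"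
    then obtain l where l: "l \<in> A" "x = \<alpha> l" by blast
    have "poly Q x = (\<Sum>i\<in>A. poly g (\<alpha> i) * (lagrange_weight \<alpha> A i * poly (L i) (\<alpha> l)))"
      unfolding Q_def poly_sum l(2) by (simp add: mult_ac)
    also have "\<dots> = (\<Sum>i\<in>A. if i = l then poly g (\<alpha> i) else 0)"
      using l fin inj
      by (intro sum.cong) (simp_all add: L_def poly_prod lagrange_weight_mult_prod_diff)
    also have "\<dots> = poly g x"
      using l fin by simp
    finally show "poly g x = poly Q x" ..
  next
    show "degree g < card (\<alpha> ` A)" using deg card_image[OF inj] by simp
    have "degree Q \<le> card A - 1" unfolding Q_def
      by (intro degree_sum_le)
        (use fin in \<open>auto intro: order.trans[OF degree_smult_le] simp: degree_L\<close>)
    then show "degree Q < card (\<alpha> ` A)" using deg card_image[OF inj] by linarith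
  qed
  moreover have "coeff Q (card A - 1) = (\<Sum>i\<in>A. lagrange_weight \<alpha> A i * poly g (\<alpha> i))"
    unfolding Q_def coeff_sum using lead_L by (intro sum.cong) simp_all
  ultimately show ?thesis by simp
qed

definition lagrange_power_sum :: "(nat \<Rightarrow> 'a::field) \<Rightarrow> nat set \<Rightarrow> nat \<Rightarrow> 'a" where
  "lagrange_power_sum \<alpha> A j = (\<Sum>i\<in>A. lagrange_weight \<alpha> A i * \<alpha> i ^ j)"

lemma lagrange_power_sum_less_card:
  assumes "finite A" "inj_on \<alpha> A" "j < card A"
  shows "lagrange_power_sum \<alpha> A j = (if j = card A - 1 then 1 else 0)"
  using coeff_eq_sum_lagrange_weight[OF assms(1,2), of "monom 1 j"] assms(3)
  by (simp add: lagrange_power_sum_def degree_monom_eq poly_monom coeff_monom)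

lemma sum_sigma_lagrange_power_sum:
  assumes "finite A"
  shows "(\<Sum>r\<le>card A. sigma \<alpha> r A * lagrange_power_sum \<alpha> A (j + (card A - r))) = 0"
proof -
  have "(\<Sum>r\<le>card A. sigma \<alpha> r A * lagrange_power_sum \<alpha> A (j + (card A - r)))
      = (\<Sum>i\<in>A. lagrange_weight \<alpha> A i * \<alpha> i ^ j * (\<Sum>r\<le>card A. sigma \<alpha> r A * \<alpha> i ^ (card A - r)))"
    unfolding lagrange_power_sum_def sum_distrib_left sum_distrib_right power_add
    by (subst sum.swap) (simp add: mult_ac)
  also have "\<dots> = (\<Sum>i\<in>A. lagrange_weight \<alpha> A i * \<alpha> i ^ j * (\<Prod>l\<in>A. \<alpha> i - \<alpha> l))"
    by (simp add: prod_diff_eq_sum_sigma assms)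
  also have "\<dots> = 0"
    using assms by (intro sum.neutral) (auto intro: prod_zero)
  finally show ?thesis .
qed

lemma lagrange_power_sum_recurrence:
  assumes fin: "finite A" and inj: "inj_on \<alpha> A" and "A \<noteq> {}" and "1 \<le> m"
  shows "(\<Sum>r\<le>m. sigma \<alpha> r A * lagrange_power_sum \<alpha> A (card A - 1 + (m - r))) = 0"
proof -
  let ?n = "card A" and ?s = "\<lambda>r. sigma \<alpha> r A" and ?p = "lagrange_power_sum \<alpha> A"
  have "1 \<le> ?n" using fin \<open>A \<noteq> {}\<close> by (simp add: Suc_le_eq card_gt_0_iff)
  have "(\<Sum>r\<le>m. ?s r * ?p (?n - 1 + (m - r))) = (\<Sum>r\<le>min m ?n. ?s r * ?p (?n - 1 + (m - r)))"
    by (rule sum.mono_neutral_right) (auto simp: sigma_eq_0_if_card_less fin)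
  also have "\<dots> = (\<Sum>r\<le>min m ?n. ?s r * ?p (m - 1 + (?n - r)))"
  proof (rule sum.cong[OF refl])
    fix r assume "r \<in> {..min m ?n}"
    then have "?n - 1 + (m - r) = m - 1 + (?n - r)" using \<open>1 \<le> ?n\<close> \<open>1 \<le> m\<close> by auto
    then show "?s r * ?p (?n - 1 + (m - r)) = ?s r * ?p (m - 1 + (?n - r))" by simp
  qed
  also have "\<dots> = (\<Sum>r\<le>?n. ?s r * ?p (m - 1 + (?n - r)))"
    using \<open>1 \<le> m\<close> by (intro sum.mono_neutral_left)
      (auto simp: lagrange_power_sum_less_card fin inj split: if_splits)
  also have "\<dots> = 0"
    by (rule sum_sigma_lagrange_power_sum[OF fin])
  finally show ?thesis .
qed

lemma inverse_power_series_coeffs: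
  fixes s h :: "nat \<Rightarrow> 'a::idom"
  assumes s0: "s 0 = 1" and h0: "h 0 = 1"
    and rec: "\<And>m. 1 \<le> m \<Longrightarrow> (\<Sum>r\<le>m. s r * h (m - r)) = 0"
  shows "h 1 = - s 1" and "h 2 = s 1 ^ 2 - s 2"
    and "h 5 = - (s 3 * s 1 ^ 2 + s 5 - s 3 * s 2 - s 4 * s 1)
                + s 2 * (s 1 ^ 3 + s 3 - 2 * s 2 * s 1)
                + s 1 * (s 2 * s 1 ^ 2 + s 4 - s 2 ^ 2 - s 3 * s 1)
                - s 1 ^ 2 * (s 1 ^ 3 + s 3 - 2 * s 2 * s 1)"
proof -
  have e1: "s 0 * h 1 + s 1 * h 0 = 0"
    and e2: "s 0 * h 2 + s 1 * h 1 + s 2 * h 0 = 0"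
    and e3: "s 0 * h 3 + s 1 * h 2 + s 2 * h 1 + s 3 * h 0 = 0"
    and e4: "s 0 * h 4 + s 1 * h 3 + s 2 * h 2 + s 3 * h 1 + s 4 * h 0 = 0"
    and e5: "s 0 * h 5 + s 1 * h 4 + s 2 * h 3 + s 3 * h 2 + s 4 * h 1 + s 5 * h 0 = 0"
    using rec[of 1] rec[of 2] rec[of 3] rec[of 4] rec[of 5] by (simp_all add: numeral_eq_Suc)
  show "h 1 = - s 1" using e1 s0 h0 by algebra
  show "h 2 = s 1 ^ 2 - s 2" using e1 e2 s0 h0 by algebra
  show "h 5 = - (s 3 * s 1 ^ 2 + s 5 - s 3 * s 2 - s 4 * s 1)
                + s 2 * (s 1 ^ 3 + s 3 - 2 * s 2 * s 1)
                + s 1 * (s 2 * s 1 ^ 2 + s 4 - s 2 ^ 2 - s 3 * s 1)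
                - s 1 ^ 2 * (s 1 ^ 3 + s 3 - 2 * s 2 * s 1)"
    using e1 e2 e3 e4 e5 s0 h0 by algebra
qed

lemma lagrange_power_sum_beyond_card:
  assumes fin: "finite A" and inj: "inj_on \<alpha> A" and n: "card A = n" "0 < n"
  defines "s r \<equiv> sigma \<alpha> r A"
  shows "lagrange_power_sum \<alpha> A n = - s 1"
    and "lagrange_power_sum \<alpha> A (n + 1) = s 1 ^ 2 - s 2"
    and "lagrange_power_sum \<alpha> A (n + 4) = - (s 3 * s 1 ^ 2 + s 5 - s 3 * s 2 - s 4 * s 1)
                + s 2 * (s 1 ^ 3 + s 3 - 2 * s 2 * s 1)
                + s 1 * (s 2 * s 1 ^ 2 + s 4 - s 2 ^ 2 - s 3 * s 1)
                - s 1 ^ 2 * (s 1 ^ 3 + s 3 - 2 * s 2 * s 1)"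
proof -
  define h where "h m = lagrange_power_sum \<alpha> A (n - 1 + m)" for m
  have shift: "lagrange_power_sum \<alpha> A (n + j) = h (Suc j)" for j
    using n by (simp add: h_def)
  have "h 0 = 1"
    using lagrange_power_sum_less_card[OF fin inj] n by (simp add: h_def)
  have "A \<noteq> {}" using n by auto
  note coeffs = inverse_power_series_coeffs[of s h, OF _ \<open>h 0 = 1\<close>]
  note rec = lagrange_power_sum_recurrence[OF fin inj \<open>A \<noteq> {}\<close>]
  show "lagrange_power_sum \<alpha> A n = - s 1"
    using coeffs(1) shift[of 0] rec n by (simp add: s_def h_def sigma_0 fin)
  show "lagrange_power_sum \<alpha> A (n + 1) = s 1 ^ 2 - s 2"
    using coeffs(2) shift[of 1] rec n by (simp add: s_def h_def sigma_0 fin)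
  show "lagrange_power_sum \<alpha> A (n + 4) = - (s 3 * s 1 ^ 2 + s 5 - s 3 * s 2 - s 4 * s 1)
                + s 2 * (s 1 ^ 3 + s 3 - 2 * s 2 * s 1)
                + s 1 * (s 2 * s 1 ^ 2 + s 4 - s 2 ^ 2 - s 3 * s 1)
                - s 1 ^ 2 * (s 1 ^ 3 + s 3 - 2 * s 2 * s 1)"
    using coeffs(3) shift[of 4] rec n by (simp add: s_def h_def sigma_0 fin)
qed

lemma poly_polyS:
  assumes "f \<in> polyS k \<eta>" and "0 < k"
  shows "poly f x = (\<Sum>l<k. coeff f l * x ^ l) + \<eta> * coeff f (k - 1) * x ^ (k + 2)"
proof -
  obtain c where f: "f = (\<Sum>i<k. monom (c i) i) + monom (\<eta> * c (k - 1)) (k + 2)"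
    using assms(1) unfolding polyS_def by blast
  have "coeff f l = c l" if "l < k" for l
    using that unfolding f by (simp add: coeff_sum coeff_monom)
  moreover have "poly f x = (\<Sum>l<k. c l * x ^ l) + \<eta> * c (k - 1) * x ^ (k + 2)"
    unfolding f by (simp add: poly_sum poly_monom)
  ultimately show ?thesis using assms(2) by simp
qed

lemma sum_lagrange_weight_polyS:
  assumes "finite A" and "inj_on \<alpha> A" and "card A = n"
    and "3 \<le> k" and "k \<le> n" and f: "f \<in> polyS k \<eta>"
  shows "(\<Sum>i\<in>A. lagrange_weight \<alpha> A i * \<alpha> i ^ (n + 2 - k) * poly f (\<alpha> i))
       = coeff f (k - 3) + coeff f (k - 2) * lagrange_power_sum \<alpha> A n
         + coeff f (k - 1) * (lagrange_power_sum \<alpha> A (n + 1) + \<eta> * lagrange_power_sum \<alpha> A (n + 4))"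
proof -
  let ?p = "lagrange_power_sum \<alpha> A"
  define e where "e = n + 2 - k"
  obtain K where K: "k = K + 3" using \<open>3 \<le> k\<close> by (metis add.commute le_Suc_ex)
  have exps: "e + K = n - 1" "e + Suc K = n" "e + Suc (Suc K) = n + 1" "e + (k + 2) = n + 4"
    using assms K by (simp_all add: e_def)
  have vanish: "?p (e + l) = 0" if "l < K" for l
    using that assms exps(1) by (simp add: lagrange_power_sum_less_card)
  have "?p (e + K) = 1"
    using assms exps(1) by (simp add: lagrange_power_sum_less_card)
  moreover have "(\<Sum>l<k. coeff f l * ?p (e + l)) = (\<Sum>l<K. coeff f l * ?p (e + l))
      + coeff f K * ?p (e + K) + coeff f (Suc K) * ?p (e + Suc K)
      + coeff f (Suc (Suc K)) * ?p (e + Suc (Suc K))"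
    unfolding K by (simp add: numeral_3_eq_3)
  ultimately have low_coeffs: "(\<Sum>l<k. coeff f l * ?p (e + l))
      = coeff f K + coeff f (K + 1) * ?p n + coeff f (K + 2) * ?p (n + 1)"
    using exps by (simp add: vanish)
  have "(\<Sum>i\<in>A. lagrange_weight \<alpha> A i * \<alpha> i ^ e * poly f (\<alpha> i))
      = (\<Sum>i\<in>A. (\<Sum>l<k. coeff f l * (lagrange_weight \<alpha> A i * \<alpha> i ^ (e + l)))
          + \<eta> * coeff f (k - 1) * (lagrange_weight \<alpha> A i * \<alpha> i ^ (e + (k + 2))))"
    using poly_polyS[OF f] K
    by (intro sum.cong) (simp_all add: sum_distrib_left distrib_left power_add mult_ac)
  also have "\<dots> = (\<Sum>l<k. coeff f l * ?p (e + l)) + \<eta> * coeff f (k - 1) * ?p (n + 4)"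
    unfolding lagrange_power_sum_def sum.distrib sum_distrib_left exps(4)[symmetric]
    by (subst sum.swap) simp
  finally show ?thesis unfolding low_coeffs e_def[symmetric] using K by (simp add: algebra_simps)
qed

lemma sum_nth_append_pair:
  "(\<Sum>i=1..length xs + 2. t i * (xs @ [a, b]) ! (i - 1))
     = (\<Sum>i=1..length xs. t i * xs ! (i - 1)) + t (length xs + 1) * a + t (length xs + 2) * b"
proof -
  have "(\<Sum>i=1..length xs. t i * (xs @ [a, b]) ! (i - 1)) = (\<Sum>i=1..length xs. t i * xs ! (i - 1))"
    by (intro sum.cong) (auto simp: nth_append)
  then show ?thesis by (simp add: nth_append)
qed

lemma extension_coordinate_polyS:
  fixes n k :: nat and \<alpha> v :: "nat \<Rightarrow> 'a::field"
  defines "p \<equiv> lagrange_power_sum \<alpha> {1..n}"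
  assumes "3 \<le> k" and "k \<le> n" and inj: "inj_on \<alpha> {1..n}"
    and v: "\<forall>i\<in>{1..n}. v i \<noteq> 0"
    and t: "\<forall>i\<in>{1..n}. t i = inverse (v i) * lagrange_weight \<alpha> {1..n} i * \<alpha> i ^ (n + 2 - k)"
    and t_tail: "t (n + 1) = \<delta> - p (n + 1) - \<eta> * p (n + 4)" "t (n + 2) = - p n"
    and f: "f \<in> polyS k \<eta>"
  shows "(\<Sum>i=1..n+2. t i * (map (\<lambda>i. v i * poly f (\<alpha> i)) [1..<n+1]
            @ [coeff f (k - 1), coeff f (k - 2)]) ! (i - 1))
       = coeff f (k - 3) + \<delta> * coeff f (k - 1)"
proof -
  let ?A = "{1..n}" and ?word = "map (\<lambda>i. v i * poly f (\<alpha> i)) [1..<n+1]"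
  have "length ?word = n" by simp
  then have "(\<Sum>i=1..n+2. t i * (?word @ [coeff f (k - 1), coeff f (k - 2)]) ! (i - 1))
      = (\<Sum>i=1..n. t i * ?word ! (i - 1))
        + t (n + 1) * coeff f (k - 1) + t (n + 2) * coeff f (k - 2)"
    using sum_nth_append_pair[of t ?word] by (simp only:)
  also have "(\<Sum>i=1..n. t i * ?word ! (i - 1))
      = (\<Sum>i\<in>?A. lagrange_weight \<alpha> ?A i * \<alpha> i ^ (n + 2 - k) * poly f (\<alpha> i))"
  proof (rule sum.cong)
    fix i assume i: "i \<in> ?A"
    then have "?word ! (i - 1) = v i * poly f (\<alpha> i)" by (auto simp del: upt_Suc)
    then show "t i * ?word ! (i - 1) = lagrange_weight \<alpha> ?A i * \<alpha> i ^ (n + 2 - k) * poly f (\<alpha> i)"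
      using i v t by simp
  qed simp
  also have "\<dots> = coeff f (k - 3) + coeff f (k - 2) * p n
      + coeff f (k - 1) * (p (n + 1) + \<eta> * p (n + 4))"
    unfolding p_def using assms(2,3) inj f by (intro sum_lagrange_weight_polyS) simp_all
  finally show ?thesis unfolding t_tail by algebra
qed

theorem theorem1:
  fixes p m n k :: nat and \<alpha> v :: "nat \<Rightarrow> 'a::{finite,field}" and \<eta> \<delta> :: 'a
    and t :: "nat \<Rightarrow> 'a"
  assumes "prime p" and "card (UNIV :: 'a set) = p ^ m"
    and "3 \<le> k" and "k \<le> n" and "n \<le> card (UNIV :: 'a set)"
    and "inj_on \<alpha> {1..n}"
    and "\<forall>i\<in>{1..n}. v i \<noteq> 0"
    and "\<eta> \<noteq> 0"
    and "\<forall>i\<in>{1..n}. t i = inverse (v i)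
            * (\<Prod>j\<in>{1..n} - {i}. inverse (\<alpha> i - \<alpha> j)) * \<alpha> i ^ (n + 2 - k)"
    and "t (n + 1) = (let s = (\<lambda>r. sigma \<alpha> r {1..n});
           S2 = s 1 ^ 2 - s 2;
           S5 = - (s 3 * s 1 ^ 2 + s 5 - s 3 * s 2 - s 4 * s 1)
                + s 2 * (s 1 ^ 3 + s 3 - 2 * s 2 * s 1)
                + s 1 * (s 2 * s 1 ^ 2 + s 4 - s 2 ^ 2 - s 3 * s 1)
                - s 1 ^ 2 * (s 1 ^ 3 + s 3 - 2 * s 2 * s 1)
         in \<delta> - S2 - \<eta> * S5)"
    and "t (n + 2) = sigma \<alpha> 1 {1..n}"
  shows "codeC n k \<alpha> v \<eta> \<delta> = extend_code (codeC1 n k \<alpha> v \<eta>) t"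
proof -
  let ?A = "{1..n}" and ?p = "lagrange_power_sum \<alpha> {1..n}"
  have card: "card ?A = n" "0 < n" using assms(3,4) by simp_all
  have "t (n + 1) = \<delta> - ?p (n + 1) - \<eta> * ?p (n + 4)" "t (n + 2) = - ?p n"
    using assms(10,11)
    unfolding lagrange_power_sum_beyond_card[OF finite_atLeastAtMost assms(6) card] Let_def
    by simp_all
  moreover have "\<forall>i\<in>?A. t i = inverse (v i) * lagrange_weight \<alpha> ?A i * \<alpha> i ^ (n + 2 - k)"
    using assms(9) by (simp add: lagrange_weight_def)
  ultimately have last_coordinate: "coeff f (k - 3) + \<delta> * coeff f (k - 1)
      = (\<Sum>i=1..n+2. t i * (map (\<lambda>i. v i * poly f (\<alpha> i)) [1..<n+1]
            @ [coeff f (k - 1), coeff f (k - 2)]) ! (i - 1))"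
    if "f \<in> polyS k \<eta>" for f
    using extension_coordinate_polyS[OF assms(3,4,6,7)] that by simp
  have len: "length (map (\<lambda>i. v i * poly f (\<alpha> i)) [1..<n+1] @ [a, b]) = n + 2" for f a b
    by simp
  show ?thesis
    unfolding codeC_def codeC1_def extend_code_def image_image
    using last_coordinate
    by (intro image_cong refl) (simp only: len append_assoc append_Cons append_Nil)
qed

end
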